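(* If $\triangle PQR$ is an equilateral triangle in $\mathbb{R}^2$, then $\mu(\triangle PQR)=\frac12$.
   Context: $D$ is the open unit disk in $\mathbb{R}^2$ and $S^1$ its boundary, identified with $\mathbb{R}/\mathbb{Z}$ via $t\mapsto(\cos2\pi t,\sin2\pi t)$. For a closed non-degenerate triangle $T\subset D$ and $v\in S^1$, there are exactly two chords $vv_1,vv_2$ of $S^1$ whose lines support $T$; with $v_1$ the one reached first moving counterclockwise from $v$, set $\psi_T(v):=v_1$; $\rho(\psi_T)$ is its rotation number $\lim_{n\to\infty}\overline{\psi_T}^{\,n}(0)/n$ with $\overline{\psi_T}$ the lift with $\overline{\psi_T}(0)\in(0,1)$. For a triangle $T$ in $\mathbb{R}^2$, $\kappa(T)$ is its circumradius if $T$ is acute, and half the length of its longest side if $T$ is right or obtuse. $\mu(\triangle PQR)$ is the infimum of $\kappa(\triangle P'Q'R')$ over all triangles $\triangle P'Q'R'$ such that (1) $\triangle P'Q'R'\subset D$, (2) $\triangle P'Q'R'$ is similar to $\triangle PQR$, and (3) every triangle $\triangle P''Q''R''\subset D$ congruent to $\triangle P'Q'R'$ satisfies $\rho(\psi_{\triangle P''Q''R''})=\frac13$. *)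

theory Defs
  imports "HOL-Analysis.Analysis"
begin

text \<open>The plane R^2 is identified with the complex plane; the point (x,y) is x + i y.\<close>

definition unit_disk :: "complex set" where
  "unit_disk = ball 0 1"

definition circ :: "real \<Rightarrow> complex" where
  "circ t = cis (2 * pi * t)"

definition tri :: "complex \<Rightarrow> complex \<Rightarrow> complex \<Rightarrow> complex set" where
  "tri P Q R = convex hull {P, Q, R}"

definition nondegenerate :: "complex \<Rightarrow> complex \<Rightarrow> complex \<Rightarrow> bool" where
  "nondegenerate P Q R \<longleftrightarrow> \<not> collinear {P, Q, R}"

definition side :: "complex \<Rightarrow> complex \<Rightarrow> complex \<Rightarrow> real" where
  "side a b p = Im (cnj (b - a) * (p - a))"

definition supports_line :: "complex \<Rightarrow> complex \<Rightarrow> complex set \<Rightarrow> bool" where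
  "supports_line a b T \<longleftrightarrow> a \<noteq> b \<and> (\<exists>p\<in>T. side a b p = 0) \<and>
     ((\<forall>p\<in>T. side a b p \<ge> 0) \<or> (\<forall>p\<in>T. side a b p \<le> 0))"

text \<open>Counterclockwise angular gap (in units of full turns, in (0,1)) from v = circ t
  to the first endpoint v1 of a chord v v1 whose line supports T.\<close>
definition psi_gap :: "complex set \<Rightarrow> real \<Rightarrow> real" where
  "psi_gap T t = Inf {s. 0 < s \<and> s < 1 \<and> supports_line (circ t) (circ (t + s)) T}"

text \<open>The lift of psi_T with value in (0,1) at 0: psi_T (circ t) = circ (psi_lift T t).\<close>
definition psi_lift :: "complex set \<Rightarrow> real \<Rightarrow> real" where
  "psi_lift T t = t + psi_gap T t"

definition has_rotation_number :: "complex set \<Rightarrow> real \<Rightarrow> bool" where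
  "has_rotation_number T r \<longleftrightarrow> (\<lambda>n. (psi_lift T ^^ n) 0 / real n) \<longlonglongrightarrow> r"

definition acute :: "complex \<Rightarrow> complex \<Rightarrow> complex \<Rightarrow> bool" where
  "acute P Q R \<longleftrightarrow> (Q - P) \<bullet> (R - P) > 0 \<and> (P - Q) \<bullet> (R - Q) > 0 \<and> (P - R) \<bullet> (Q - R) > 0"

definition circumradius :: "complex \<Rightarrow> complex \<Rightarrow> complex \<Rightarrow> real" where
  "circumradius P Q R = (THE r. \<exists>C. dist C P = r \<and> dist C Q = r \<and> dist C R = r)"

definition kappa :: "complex \<Rightarrow> complex \<Rightarrow> complex \<Rightarrow> real" where
  "kappa P Q R = (if acute P Q R then circumradius P Q R
                  else Max {dist P Q, dist Q R, dist R P} / 2)"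

definition similar_tri :: "complex set \<Rightarrow> complex set \<Rightarrow> bool" where
  "similar_tri S T \<longleftrightarrow> (\<exists>c>0. \<exists>f. (\<forall>x y. dist (f x) (f y) = c * dist x y) \<and> f ` S = T)"

definition congruent_tri :: "complex set \<Rightarrow> complex set \<Rightarrow> bool" where
  "congruent_tri S T \<longleftrightarrow> (\<exists>f. (\<forall>x y. dist (f x) (f y) = dist x y) \<and> f ` S = T)"

definition mu :: "complex \<Rightarrow> complex \<Rightarrow> complex \<Rightarrow> real" where
  "mu P Q R = Inf {kappa P' Q' R' | P' Q' R'.
      nondegenerate P' Q' R' \<and> tri P' Q' R' \<subseteq> unit_disk \<and>
      similar_tri (tri P' Q' R') (tri P Q R) \<and>
      (\<forall>P'' Q'' R''. nondegenerate P'' Q'' R'' \<and> tri P'' Q'' R'' \<subseteq> unit_disk \<and>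
         congruent_tri (tri P'' Q'' R'') (tri P' Q' R') \<longrightarrow>
         has_rotation_number (tri P'' Q'' R'') (1/3))}"

end

theory Submission
  imports Defs
begin

text \<open>For a triangle T in the disk, the lift of \<open>psi_T\<close> is a monotone degree-one map
  that advances t by the angular length of the chord from \<open>circ t\<close> supporting T on its left.

  If T lies in the disk of radius \<open>r < 1/2\<close> about the origin, each such chord meets that disk,
  so its arc is longer than \<open>arccos r / pi > 1/3\<close> and the rotation number exceeds 1/3.

  If T is equilateral of side \<open>sqrt 3 / 2\<close> and lies in the disk, the composition of the three
  disk involutions exchanging 0 with a vertex fixes a point of the circle: the resulting closed
  triangle of chords through the vertices is a periodic orbit of period 3 going once around,
  so the rotation number is 1/3. Whether such a fixed point exists is a real quadratic
  condition, which reduces to AM-GM for \<open>1 - \<bar>A\<^sub>i\<bar>\<^sup>2\<close>.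

  For an equilateral triangle \<open>kappa\<close> is the circumradius, \<open>side / sqrt 3\<close>. An admissible copy
  thus has \<open>kappa \<ge> 1/2\<close> (otherwise its centred congruent copy rotates too fast), and the copy of
  side \<open>sqrt 3 / 2\<close> is admissible with \<open>kappa = 1/2\<close>.\<close>

section \<open>The parametrised circle\<close>

lemma norm_circ [simp]: "norm (circ t) = 1"
  by (simp add: circ_def)

lemma circ_add: "circ (a + b) = circ a * circ b"
  by (simp add: circ_def cis_mult distrib_left)

lemma circ_add_of_int [simp]: "circ (t + of_int k) = circ t"
proof -
  have "cis (2 * pi * real_of_int k) = 1"
    by (rule cis_multiple_2pi) simp
  then show ?thesis by (simp add: circ_def cis_mult[symmetric] distrib_left)
qed

lemma circ_eq_imp_diff_int:
  assumes "circ a = circ b"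
  shows "\<exists>k::int. a - b = of_int k"
proof -
  have "circ (a - b) * circ b = circ b"
    using assms by (metis circ_add diff_add_cancel)
  then have "circ (a - b) = 1"
    by (metis mult_cancel_right2 norm_circ norm_zero zero_neq_one)
  then have "cos (2 * pi * (a - b)) = 1"
    by (simp add: circ_def complex_eq_iff)
  then obtain n :: int where "2 * pi * (a - b) = of_int n * 2 * pi"
    using cos_one_2pi_int by blast
  then show ?thesis by (intro exI[of _ n]) simp
qed

lemma circ_add_neq: "0 < s \<Longrightarrow> s < 1 \<Longrightarrow> circ (t + s) \<noteq> circ t"
proof
  assume "0 < s" "s < 1" "circ (t + s) = circ t"
  then obtain k :: int where "s = of_int k"
    using circ_eq_imp_diff_int[of "t + s" t] by auto
  with \<open>0 < s\<close> \<open>s < 1\<close> have "0 < k" "k < 1" by simp_all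
  then show False by simp
qed

lemma circ_reaches:
  assumes "norm w = 1" "w \<noteq> circ t"
  shows "\<exists>s. 0 < s \<and> s < 1 \<and> circ (t + s) = w"
proof -
  define z where "z = w / circ t"
  have "norm z = 1" using assms by (simp add: z_def norm_divide)
  then have "z \<noteq> 0" by auto
  then have zc: "z = cis (Arg z)"
    using cis_Arg[of z] \<open>norm z = 1\<close> by (simp add: sgn_div_norm)
  have "z \<noteq> 1" using assms by (simp add: z_def)
  then have "Arg z \<noteq> 0" using zc by auto
  define s0 where "s0 = Arg z / (2 * pi)"
  have s0: "- 1/2 < s0" "s0 \<le> 1/2" "s0 \<noteq> 0"
    using Arg_bounded[of z] \<open>Arg z \<noteq> 0\<close> by (auto simp: s0_def field_simps)
  have "circ s0 = z"
    using zc by (simp add: circ_def s0_def)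
  moreover have "circ t \<noteq> 0"
    by (metis norm_circ norm_zero zero_neq_one)
  ultimately have w: "circ (t + s0) = w"
    by (simp add: circ_add z_def)
  show ?thesis
  proof (cases "0 < s0")
    case True
    then show ?thesis using s0 w by (intro exI[of _ s0]) auto
  next
    case False
    have "circ (t + (s0 + 1)) = w"
      using w circ_add_of_int[of "t + s0" 1] by (simp add: add.assoc)
    then show ?thesis using False s0 by (intro exI[of _ "s0 + 1"]) auto
  qed
qed

lemma circ_surj: "norm w = 1 \<Longrightarrow> \<exists>t. circ t = w"
  using circ_reaches[of w 0] by (cases "w = circ 0") auto

lemma sin_pi_mult_pos: "0 < x \<Longrightarrow> x < 1 \<Longrightarrow> 0 < sin (pi * x)"
  by (rule sin_gt_zero) auto

lemma sin_pi_mult_neg: "-1 < x \<Longrightarrow> x < 0 \<Longrightarrow> sin (pi * x) < 0"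
  using sin_pi_mult_pos[of "-x"] by simp

lemma sin_pi_mult_nonneg: "0 \<le> x \<Longrightarrow> x \<le> 1 \<Longrightarrow> 0 \<le> sin (pi * x)"
  by (rule sin_ge_zero) auto

section \<open>Signed area\<close>

lemma side_self: "side v X X = 0"
  by (simp add: side_def algebra_simps)

lemma side_swap: "side a b c = - side a c b"
  by (simp add: side_def algebra_simps)

lemma side_rotate: "side a b c = side b c a"
  by (simp add: side_def algebra_simps)

lemma side_affine: "side a b (p + of_real l * (q - p)) = (1 - l) * side a b p + l * side a b q"
  by (simp add: side_def algebra_simps)

lemma side_scale_third: "side a b (a + of_real l * (c - a)) = l * side a b c"
  by (simp add: side_def algebra_simps)

lemma side_scale_second: "side a (a + of_real l * (c - a)) p = l * side a c p"
  by (simp add: side_def algebra_simps)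

lemma side_convex_comb3:
  assumes "u + v + w = 1"
  shows "side a b (u *\<^sub>R A + v *\<^sub>R B + w *\<^sub>R C) = u * side a b A + v * side a b B + w * side a b C"
proof -
  have "a = u *\<^sub>R a + v *\<^sub>R a + w *\<^sub>R a"
    using assms by (metis scaleR_add_left scaleR_one)
  then have "side a b (u *\<^sub>R A + v *\<^sub>R B + w *\<^sub>R C)
      = Im (cnj (b - a) * (u *\<^sub>R (A - a) + v *\<^sub>R (B - a) + w *\<^sub>R (C - a)))"
    unfolding side_def by (metis (no_types, lifting) add_diff_add scaleR_right_diff_distrib)
  then show ?thesis
    by (simp add: side_def scaleR_conv_of_real algebra_simps)
qed

lemma side_nonneg_convex_hull3:
  assumes "side a b A \<ge> 0" "side a b B \<ge> 0" "side a b C \<ge> 0" "p \<in> convex hull {A, B, C}"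
  shows "side a b p \<ge> 0"
proof -
  from assms(4) obtain u v w where uvw: "0 \<le> u" "0 \<le> v" "0 \<le> w" "u + v + w = 1"
    "p = u *\<^sub>R A + v *\<^sub>R B + w *\<^sub>R C" unfolding convex_hull_3 by blast
  then show ?thesis
    using assms(1-3) side_convex_comb3[OF uvw(4)] by simp
qed

lemma collinear_imp_side_eq_0: "collinear {P, Q, R} \<Longrightarrow> side P Q R = 0"
proof -
  assume "collinear {P, Q, R}"
  then obtain u where u: "\<forall>x\<in>{P, Q, R}. \<forall>y\<in>{P, Q, R}. \<exists>c. x - y = c *\<^sub>R u"
    unfolding collinear_def by blast
  obtain c1 c2 where "Q - P = c1 *\<^sub>R u" "R - P = c2 *\<^sub>R u" using u by blast
  then show ?thesis by (simp add: side_def scaleR_conv_of_real algebra_simps)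
qed

lemma side_of_points_on_edges:
  "side (v0 + of_real l0 * (v1 - v0)) (v1 + of_real l1 * (v2 - v1)) (v2 + of_real l2 * (v0 - v2))
   = side v0 v1 v2 * (l0 * l1 * l2 + (1 - l0) * (1 - l1) * (1 - l2))"
  by (simp add: side_def algebra_simps)

lemma sin_doubles_identity:
  fixes x y :: real
  shows "sin (2*y) + sin (2*x) - sin (2*x + 2*y) = 4 * sin x * sin y * sin (x + y)"
proof -
  have "sin x ^ 2 + cos x ^ 2 = 1" "sin y ^ 2 + cos y ^ 2 = 1" by simp_all
  moreover have "sin (2*x + 2*y) = sin (2*x) * cos (2*y) + cos (2*x) * sin (2*y)"
    by (rule sin_add)
  ultimately show ?thesis
    unfolding sin_add sin_double cos_double by algebra
qed

lemma side_circ: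
  "side (circ a) (circ b) (circ c) = 4 * sin (pi*(b-a)) * sin (pi*(c-b)) * sin (pi*(c-a))"
proof -
  have "side (circ a) (circ b) (circ c)
      = sin (2*(pi*(c-b))) + sin (2*(pi*(b-a))) - sin (2*(pi*(b-a)) + 2*(pi*(c-b)))"
    by (simp add: side_def circ_def sin_diff algebra_simps)
  also have "\<dots> = 4 * sin (pi*(b-a)) * sin (pi*(c-b)) * sin (pi*(b-a) + pi*(c-b))"
    by (rule sin_doubles_identity)
  also have "pi*(b-a) + pi*(c-b) = pi*(c-a)"
    by (simp add: algebra_simps)
  finally show ?thesis .
qed

lemma side_circ_shift:
  "side (circ t) (circ (t + s)) (circ (t + u)) = 4 * sin (pi * s) * sin (pi * (u - s)) * sin (pi * u)"
  using side_circ[of t "t + s" "t + u"] by simp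

section \<open>Chords of the unit circle\<close>

lemma norm_chord_point_sq:
  fixes v w :: complex
  assumes "norm v = 1" "norm w = 1"
  shows "(norm (v + of_real l * (w - v)))^2 = 1 + l * (l - 1) * (norm (w - v))^2"
proof -
  have "(Re v)^2 + (Im v)^2 = 1" "(Re w)^2 + (Im w)^2 = 1"
    using assms cmod_power2[of v] cmod_power2[of w] by simp_all
  then have "(Re v + l * (Re w - Re v))^2 + (Im v + l * (Im w - Im v))^2
      = 1 + l * (l - 1) * ((Re w - Re v)^2 + (Im w - Im v)^2)"
    by algebra
  then show ?thesis by (simp add: cmod_power2)
qed

lemma chord_point_of_side_eq_0:
  assumes "norm v = 1" "norm w = 1" "v \<noteq> w" "side v w p = 0" "norm p < 1"
  shows "\<exists>l. 0 < l \<and> l < 1 \<and> p = v + of_real l * (w - v)"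
proof -
  define d where "d = w - v"
  define n where "n = (norm d)^2"
  have n: "n > 0" using assms(3) by (simp add: n_def d_def)
  define l where "l = Re (cnj d * (p - v)) / n"
  have "Im (cnj d * (p - v)) = 0" using assms(4) by (simp add: side_def d_def)
  then have "cnj d * (p - v) = of_real (l * n)"
    using n by (simp add: l_def complex_eq_iff)
  then have "of_real n * (p - v) = of_real n * (of_real l * d)"
    by (metis (no_types, lifting) complex_norm_square mult.assoc mult.commute n_def of_real_mult)
  then have "p - v = of_real l * (w - v)"
    using n by (simp add: d_def)
  then have p: "p = v + of_real l * (w - v)"
    by (simp add: algebra_simps)
  have "(norm p)^2 < 1" using assms(5) by (simp add: power_less_one_iff)
  then have "l * (l - 1) * n < 0"
    using norm_chord_point_sq[OF assms(1,2), of l] p by (simp add: n_def d_def)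
  then have "l * (l - 1) < 0" using n by (simp add: mult_less_0_iff)
  then show ?thesis using p by (auto simp: mult_less_0_iff)
qed

lemma norm_circ_chord_sq: "(norm (circ (t + s) - circ t))^2 = 4 * (sin (pi * s))^2"
proof -
  have "circ (t + s) - circ t = circ t * (circ s - 1)" by (simp add: circ_add algebra_simps)
  then have "norm (circ (t + s) - circ t) = norm (circ s - 1)" by (simp add: norm_mult)
  moreover have "(norm (circ s - 1))^2 = (cos (2 * pi * s) - 1)^2 + (sin (2 * pi * s))^2"
    by (simp add: cmod_power2 circ_def)
  moreover have "(cos (2 * pi * s) - 1)^2 + (sin (2 * pi * s))^2 = 2 - 2 * cos (2 * pi * s)"
    using sin_cos_squared_add[of "2 * pi * s"] by algebra
  moreover have "cos (2 * pi * s) = 1 - 2 * (sin (pi * s))^2"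
    using cos_double_sin[of "pi * s"] by (simp add: mult.assoc)
  ultimately show ?thesis by simp
qed

lemma psi_gap_eqI:
  assumes T: "T \<subseteq> ball 0 1" and s: "0 < s" "s < 1"
    and left: "\<forall>p\<in>T. side (circ t) (circ (t + s)) p \<ge> 0"
    and touch: "\<exists>p\<in>T. side (circ t) (circ (t + s)) p = 0"
  shows "psi_gap T t = s"
proof -
  define S where "S = {s. 0 < s \<and> s < 1 \<and> supports_line (circ t) (circ (t + s)) T}"
  have "s \<in> S"
    unfolding S_def supports_line_def using s left touch circ_add_neq[OF s, of t] by auto
  moreover have "s \<le> s'" if "s' \<in> S" for s'
  proof (rule ccontr)
    assume "\<not> s \<le> s'"
    with that have s': "0 < s'" "s' < s" and "supports_line (circ t) (circ (t + s')) T"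
      by (auto simp: S_def)
    then obtain q where qT: "q \<in> T" and q0: "side (circ t) (circ (t + s')) q = 0"
      and "(\<forall>p\<in>T. side (circ t) (circ (t + s')) p \<ge> 0) \<or> (\<forall>p\<in>T. side (circ t) (circ (t + s')) p \<le> 0)"
      unfolding supports_line_def by blast
    from this(3) show False
    proof
      \<comment> \<open>the touching point of the shorter chord lies strictly right of the given one\<close>
      assume "\<forall>p\<in>T. side (circ t) (circ (t + s')) p \<ge> 0"
      have "norm q < 1" using qT T by auto
      then obtain l where l: "0 < l" "q = circ t + of_real l * (circ (t + s') - circ t)"
        using chord_point_of_side_eq_0[of "circ t" "circ (t + s')" q] q0 circ_add_neq[of s' t] s' s
        by auto
      have "side (circ t) (circ (t + s)) q = l * (4 * sin (pi * s) * sin (pi * (s' - s)) * sin (pi * s'))"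
        using l(2) side_scale_third side_circ_shift by simp
      also have "\<dots> < 0"
        using l(1) sin_pi_mult_pos[OF s] sin_pi_mult_pos[of s'] sin_pi_mult_neg[of "s' - s"] s' s
        by (simp add: mult_pos_neg mult_neg_pos)
      finally show False using left qT by fastforce
    next
      \<comment> \<open>the touching point of the given chord lies strictly left of the shorter one\<close>
      assume right: "\<forall>p\<in>T. side (circ t) (circ (t + s')) p \<le> 0"
      obtain p where pT: "p \<in> T" and p0: "side (circ t) (circ (t + s)) p = 0"
        using touch by blast
      have "norm p < 1" using pT T by auto
      then obtain l where l: "0 < l" "p = circ t + of_real l * (circ (t + s) - circ t)"
        using chord_point_of_side_eq_0[of "circ t" "circ (t + s)" p] p0 circ_add_neq[OF s, of t]
        by auto
      have "side (circ t) (circ (t + s')) p = l * (4 * sin (pi * s') * sin (pi * (s - s')) * sin (pi * s))"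
        using l(2) side_scale_third side_circ_shift by simp
      also have "\<dots> > 0"
        using l(1) sin_pi_mult_pos[OF s] sin_pi_mult_pos[of s'] sin_pi_mult_pos[of "s - s'"] s' s
        by simp
      finally show False using right pT by fastforce
    qed
  qed
  ultimately have "Inf S = s" by (intro cInf_eq_minimum) auto
  then show ?thesis by (simp add: psi_gap_def S_def)
qed

text \<open>Viewed from a point v of the circle, the points of the open disk are totally
  preordered by the sign of side v; this gives each triangle a vertex that is
  extreme in the clockwise direction.\<close>

lemma side_eq_cross_rotated:
  assumes "norm v = 1"
  shows "side v X Y = Re (cnj v * (X - v)) * Im (cnj v * (Y - v)) - Im (cnj v * (X - v)) * Re (cnj v * (Y - v))"
proof -
  have "v * cnj v = 1"
    using assms by (metis complex_norm_square norm_one of_real_1 power_one)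
  moreover have "cnj (cnj v * (X - v)) * (cnj v * (Y - v)) = (v * cnj v) * (cnj (X - v) * (Y - v))"
    by (simp add: algebra_simps)
  ultimately have "cnj (X - v) * (Y - v) = cnj (cnj v * (X - v)) * (cnj v * (Y - v))"
    by simp
  moreover have "Im (cnj a * b) = Re a * Im b - Im a * Re b" for a b
    by simp
  ultimately show ?thesis unfolding side_def by metis
qed

lemma Re_rotated_disk_point_neg:
  assumes "norm v = 1" "norm X < 1"
  shows "Re (cnj v * (X - v)) < 0"
proof -
  have "cnj v * v = 1"
    using assms by (metis complex_norm_square mult.commute norm_one of_real_1 power_one)
  moreover have "Re (cnj v * X) < 1"
    using complex_Re_le_cmod[of "cnj v * X"] assms by (simp add: norm_mult)
  ultimately show ?thesis by (simp add: right_diff_distrib)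
qed

lemma side_trans:
  assumes v: "norm v = 1" and "norm X < 1" "norm Y < 1" "norm Z < 1"
    and XY: "side v X Y \<ge> 0" and YZ: "side v Y Z \<ge> 0"
  shows "side v X Z \<ge> 0"
proof -
  define x y z where "x = cnj v * (X - v)" and "y = cnj v * (Y - v)" and "z = cnj v * (Z - v)"
  have neg: "Re x < 0" "Re y < 0" "Re z < 0"
    using Re_rotated_disk_point_neg[OF v] assms(2-4) by (simp_all add: x_def y_def z_def)
  define cr where "cr a b = Re a * Im b - Im a * Re b" for a b :: complex
  have "Re y * cr x z = Re x * cr y z + Re z * cr x y"
    by (simp add: cr_def algebra_simps)
  moreover have "cr x y \<ge> 0" "cr y z \<ge> 0"
    using XY YZ by (simp_all add: side_eq_cross_rotated[OF v] cr_def x_def y_def z_def)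
  ultimately have "Re y * cr x z \<le> 0"
    using neg by (smt (verit) mult_nonpos_nonneg)
  then have "cr x z \<ge> 0" using neg(2) by (simp add: mult_le_0_iff)
  then show ?thesis by (simp add: side_eq_cross_rotated[OF v] cr_def x_def z_def)
qed

lemma exists_side_extreme_vertex:
  assumes v: "norm v = 1" and "norm A < 1" "norm B < 1" "norm C < 1"
  shows "\<exists>X\<in>{A, B, C}. \<forall>Y\<in>{A, B, C}. side v X Y \<ge> 0"
proof -
  have total: "side v X Y \<ge> 0 \<or> side v Y X \<ge> 0" for X Y
    using side_swap[of v X Y] by linarith
  show ?thesis
  proof (cases "side v A B \<ge> 0 \<and> side v A C \<ge> 0")
    case True
    then show ?thesis by (auto simp: side_self)
  next
    case notA: False
    show ?thesis
    proof (cases "side v B A \<ge> 0 \<and> side v B C \<ge> 0")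
      case True
      then show ?thesis by (auto simp: side_self)
    next
      case notB: False
      have "side v A C \<ge> 0 \<Longrightarrow> side v C B \<ge> 0 \<Longrightarrow> side v A B \<ge> 0"
        by (rule side_trans[OF v assms(2,4,3)])
      moreover have "side v B C \<ge> 0 \<Longrightarrow> side v C A \<ge> 0 \<Longrightarrow> side v B A \<ge> 0"
        by (rule side_trans[OF v assms(3,4,2)])
      ultimately have "side v C A \<ge> 0 \<and> side v C B \<ge> 0"
        using notA notB total[of A B] total[of A C] total[of B C] by blast
      then show ?thesis by (auto simp: side_self)
    qed
  qed
qed

section \<open>Supporting chords of a triangle\<close>

text \<open>The involution of the disk exchanging 0 and X maps each point v of the circle to the
  other end of the chord through v and X.\<close>

definition chord_end :: "complex \<Rightarrow> complex \<Rightarrow> complex" where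
  "chord_end X v = (X - v) / (1 - cnj X * v)"

lemma chord_end_props:
  assumes v: "norm v = 1" and X: "norm X < 1"
  shows "norm (chord_end X v) = 1" "chord_end X v \<noteq> v" "side v (chord_end X v) X = 0"
proof -
  define Y where "Y = cnj v * X"
  have vv: "cnj v * v = 1"
    using v by (metis complex_norm_square mult.commute norm_one of_real_1 power_one)
  have XY: "X = v * Y"
    unfolding Y_def using vv by (metis mult.assoc mult.commute mult_1)
  have "Re Y \<le> norm Y" by (rule complex_Re_le_cmod)
  also have "norm Y < 1" using X v by (simp add: Y_def norm_mult)
  finally have ReY: "Re Y < 1" .
  have Y1: "1 - Y \<noteq> 0" "1 - cnj Y \<noteq> 0"
    using ReY by (auto simp: complex_eq_iff)
  have e: "chord_end X v = v * (Y - 1) / (1 - cnj Y)"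
    unfolding chord_end_def using vv by (simp add: XY right_diff_distrib mult.assoc mult.left_commute)
  have "norm (1 - cnj Y) = norm (Y - 1)"
    by (metis complex_cnj_diff complex_cnj_one complex_mod_cnj norm_minus_commute)
  then show "norm (chord_end X v) = 1"
    using Y1 v by (simp add: e norm_mult norm_divide)
  show "chord_end X v \<noteq> v"
  proof
    assume "chord_end X v = v"
    then have "v * (Y - 1) = v * (1 - cnj Y)" using Y1 by (simp add: e divide_eq_eq)
    then have "Y - 1 = 1 - cnj Y" using v by (metis mult_cancel_left norm_zero zero_neq_one)
    then show False using ReY by (simp add: complex_eq_iff)
  qed
  have "chord_end X v - v = v * (Y + cnj Y - 2) / (1 - cnj Y)"
    using Y1 by (simp add: e field_simps)
  then have "cnj (chord_end X v - v) = cnj v * (cnj Y + Y - 2) / (1 - Y)"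
    by simp
  moreover have "X - v = v * (Y - 1)" using XY by (simp add: algebra_simps)
  ultimately have "cnj (chord_end X v - v) * (X - v) = cnj v * (cnj Y + Y - 2) / (1 - Y) * (v * (Y - 1))"
    by (simp only:)
  also have "\<dots> = (cnj v * v) * (Y + cnj Y - 2) * ((Y - 1) / (1 - Y))"
    using Y1 by (simp add: field_simps)
  also have "(Y - 1) / (1 - Y) = -1"
    using Y1 by (simp add: divide_eq_eq)
  finally show "side v (chord_end X v) X = 0"
    using vv by (simp add: side_def)
qed

lemma convex_hull3_subset_ball:
  assumes "norm A < 1" "norm B < 1" "norm C < 1"
  shows "convex hull {A, B, C} \<subseteq> ball 0 1"
  using assms by (intro hull_minimal) auto

lemma exists_supporting_chord:
  assumes A: "norm A < 1" and B: "norm B < 1" and C: "norm C < 1"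
  shows "\<exists>s. 0 < s \<and> s < 1 \<and> (\<forall>p\<in>convex hull {A, B, C}. side (circ t) (circ (t + s)) p \<ge> 0)
            \<and> (\<exists>p\<in>convex hull {A, B, C}. side (circ t) (circ (t + s)) p = 0)"
proof -
  define v where "v = circ t"
  have v: "norm v = 1" by (simp add: v_def)
  obtain X where XA: "X \<in> {A, B, C}" and ext: "\<forall>Y\<in>{A, B, C}. side v X Y \<ge> 0"
    using exists_side_extreme_vertex[OF v A B C] by blast
  have X: "norm X < 1" using XA A B C by auto
  define w where "w = chord_end X v"
  have w: "norm w = 1" "w \<noteq> v" "side v w X = 0"
    using chord_end_props[OF v X] by (simp_all add: w_def)
  obtain s where s: "0 < s" "s < 1" "circ (t + s) = w"
    using circ_reaches[OF w(1)] w(2) by (auto simp: v_def)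
  obtain l where l: "0 < l" "X = v + of_real l * (w - v)"
    using chord_point_of_side_eq_0[OF v w(1) w(2)[symmetric] w(3) X] by blast
  have "side v w Y \<ge> 0" if "Y \<in> {A, B, C}" for Y
  proof -
    have "0 \<le> side v X Y" using ext that by blast
    then have "0 \<le> l * side v w Y"
      using l(2) side_scale_second[of v l w Y] by simp
    then show ?thesis using l(1) by (simp add: zero_le_mult_iff)
  qed
  then have "\<forall>p\<in>convex hull {A, B, C}. side v w p \<ge> 0"
    using side_nonneg_convex_hull3[of v w A B C] by blast
  moreover have "X \<in> convex hull {A, B, C}"
    using XA by (rule hull_inc)
  ultimately show ?thesis
    using s w(3) by (auto simp: v_def)
qed

lemma psi_gap_triangle:
  assumes A: "norm A < 1" and B: "norm B < 1" and C: "norm C < 1"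
  defines "T \<equiv> convex hull {A, B, C}"
  shows "0 < psi_gap T t" "psi_gap T t < 1"
    "\<forall>p\<in>T. side (circ t) (circ (t + psi_gap T t)) p \<ge> 0"
    "\<exists>p\<in>T. side (circ t) (circ (t + psi_gap T t)) p = 0"
proof -
  obtain s where s: "0 < s" "s < 1" "\<forall>p\<in>T. side (circ t) (circ (t + s)) p \<ge> 0"
    "\<exists>p\<in>T. side (circ t) (circ (t + s)) p = 0"
    using exists_supporting_chord[OF A B C] unfolding T_def by blast
  moreover have "psi_gap T t = s"
    using psi_gap_eqI[OF _ s] convex_hull3_subset_ball[OF A B C] by (simp add: T_def)
  ultimately show "0 < psi_gap T t" "psi_gap T t < 1"
    "\<forall>p\<in>T. side (circ t) (circ (t + psi_gap T t)) p \<ge> 0"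
    "\<exists>p\<in>T. side (circ t) (circ (t + psi_gap T t)) p = 0"
    by simp_all
qed

lemma psi_lift_add_of_int: "psi_lift T (t + of_int k) = psi_lift T t + of_int k"
proof -
  have "circ (t + of_int k + s) = circ (t + s)" for s
    by (metis add.commute add.left_commute circ_add_of_int)
  then show ?thesis by (simp add: psi_lift_def psi_gap_def)
qed

lemma psi_lift_mono_within_turn:
  assumes A: "norm A < 1" and B: "norm B < 1" and C: "norm C < 1"
    and t: "t1 \<le> t2" "t2 < t1 + 1"
  defines "T \<equiv> convex hull {A, B, C}"
  shows "psi_lift T t1 \<le> psi_lift T t2"
proof (rule ccontr)
  define s1 s2 where "s1 = psi_gap T t1" and "s2 = psi_gap T t2"
  assume "\<not> psi_lift T t1 \<le> psi_lift T t2"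
  then have lt: "t2 + s2 < t1 + s1" by (simp add: psi_lift_def s1_def s2_def)
  have s1: "0 < s1" "s1 < 1" "\<forall>p\<in>T. side (circ t1) (circ (t1 + s1)) p \<ge> 0"
    using psi_gap_triangle[OF A B C, of t1] by (simp_all add: s1_def T_def)
  have s2: "0 < s2" "s2 < 1" "\<exists>p\<in>T. side (circ t2) (circ (t2 + s2)) p = 0"
    using psi_gap_triangle[OF A B C, of t2] by (simp_all add: s2_def T_def)
  obtain q where qT: "q \<in> T" and q0: "side (circ t2) (circ (t2 + s2)) q = 0"
    using s2 by blast
  have "norm q < 1" using qT convex_hull3_subset_ball[OF A B C] by (auto simp: T_def)
  then obtain l where l: "0 < l" "l < 1" "q = circ t2 + of_real l * (circ (t2 + s2) - circ t2)"
    using chord_point_of_side_eq_0[of "circ t2" "circ (t2 + s2)" q] q0 circ_add_neq[of s2 t2] s2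
    by auto
  \<comment> \<open>both ends of the chord through q lie strictly inside the arc cut off by the first chord\<close>
  define u u' where "u = t2 - t1" and "u' = t2 + s2 - t1"
  have u: "0 \<le> u" "u < s1" "0 < u'" "u' < s1" using t lt s2 by (auto simp: u_def u'_def)
  have "circ t2 = circ (t1 + u)" "circ (t2 + s2) = circ (t1 + u')"
    by (simp_all add: u_def u'_def)
  then have "side (circ t1) (circ (t1 + s1)) q =
      (1 - l) * side (circ t1) (circ (t1 + s1)) (circ (t1 + u))
      + l * side (circ t1) (circ (t1 + s1)) (circ (t1 + u'))"
    using l(3) side_affine by simp
  also have "\<dots> = (1 - l) * (4 * sin (pi * s1) * sin (pi * (u - s1)) * sin (pi * u))
      + l * (4 * sin (pi * s1) * sin (pi * (u' - s1)) * sin (pi * u'))"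
    by (simp only: side_circ_shift)
  also have "\<dots> < 0"
  proof -
    have "0 < sin (pi * s1)" "sin (pi * (u - s1)) < 0" "0 \<le> sin (pi * u)"
      "sin (pi * (u' - s1)) < 0" "0 < sin (pi * u')"
      using sin_pi_mult_pos[of s1] sin_pi_mult_neg[of "u - s1"] sin_pi_mult_nonneg[of u]
        sin_pi_mult_neg[of "u' - s1"] sin_pi_mult_pos[of u'] u s1 by simp_all
    then have "(1 - l) * (4 * sin (pi * s1) * sin (pi * (u - s1)) * sin (pi * u)) \<le> 0"
      "l * (4 * sin (pi * s1) * sin (pi * (u' - s1)) * sin (pi * u')) < 0"
      using l by (simp_all add: mult_le_0_iff mult_pos_neg mult_neg_pos)
    then show ?thesis by linarith
  qed
  finally show False using s1(3) qT by fastforce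
qed

lemma psi_lift_mono:
  assumes A: "norm A < 1" and B: "norm B < 1" and C: "norm C < 1" and t: "t1 \<le> t2"
  defines "F \<equiv> psi_lift (convex hull {A, B, C})"
  shows "F t1 \<le> F t2"
proof -
  define k where "k = floor (t2 - t1)"
  define d where "d = t2 - t1 - of_int k"
  have d: "0 \<le> d" "d < 1" using floor_correct[of "t2 - t1"] unfolding d_def k_def by linarith+
  have "F t1 \<le> F (t1 + d)"
    using psi_lift_mono_within_turn[OF A B C, of t1 "t1 + d"] d by (simp add: F_def)
  also have "\<dots> \<le> F (t1 + d) + of_int k" using t by (simp add: k_def)
  also have "\<dots> = F t2"
    using psi_lift_add_of_int[of _ "t1 + d" k] by (simp add: F_def d_def)
  finally show ?thesis .
qed

section \<open>Rotation numbers of circle lifts\<close>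

lemma LIMSEQ_div_of_nat_if_bounded_deviation:
  fixes a :: "nat \<Rightarrow> real"
  assumes "\<And>n. \<bar>a n - real n * c\<bar> \<le> K"
  shows "(\<lambda>n. a n / real n) \<longlonglongrightarrow> c"
proof -
  have "(\<lambda>n. (a n - real n * c) / real n) \<longlonglongrightarrow> 0"
  proof (rule Lim_null_comparison)
    show "\<forall>\<^sub>F n in sequentially. norm ((a n - real n * c) / real n) \<le> K / real n"
      using assms by (intro always_eventually allI) (simp add: abs_divide divide_right_mono)
  qed (rule lim_const_over_n)
  then have "(\<lambda>n. c + (a n - real n * c) / real n) \<longlonglongrightarrow> c"
    using tendsto_add[OF tendsto_const] by fastforce
  moreover have "\<forall>\<^sub>F n in sequentially. c + (a n - real n * c) / real n = a n / real n"
    by (rule eventually_sequentiallyI[of 1]) (simp add: field_simps)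
  ultimately show ?thesis by (rule Lim_transform_eventually)
qed

lemma rotation_number_ge_displacement:
  fixes F :: "real \<Rightarrow> real"
  assumes step: "\<And>x. x + c \<le> F x" and lim: "(\<lambda>n. (F ^^ n) 0 / real n) \<longlonglongrightarrow> r"
  shows "c \<le> r"
proof -
  have iter: "real n * c \<le> (F ^^ n) 0" for n
  proof (induction n)
    case (Suc n)
    then show ?case using step[of "(F ^^ n) 0"] by (simp add: algebra_simps)
  qed simp
  have "\<forall>n\<ge>1. c \<le> (F ^^ n) 0 / real n"
    using iter by (simp add: field_simps mult.commute)
  then show ?thesis using LIMSEQ_le_const[OF lim] by blast
qed

locale circle_lift =
  fixes F :: "real \<Rightarrow> real"
  assumes add_of_int: "F (x + of_int k) = F x + of_int k"
    and mono: "x \<le> y \<Longrightarrow> F x \<le> F y"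
    and ge: "x \<le> F x" and le: "F x \<le> x + 1"
begin

lemma funpow_add_of_int: "(F ^^ n) (x + of_int k) = (F ^^ n) x + of_int k"
  by (induction n arbitrary: x) (simp_all add: add_of_int)

lemma funpow_mono: "x \<le> y \<Longrightarrow> (F ^^ n) x \<le> (F ^^ n) y"
  by (induction n arbitrary: x y) (simp_all add: mono)

lemma funpow_bounds: "x \<le> (F ^^ n) x \<and> (F ^^ n) x \<le> x + real n"
proof (induction n)
  case (Suc n)
  then show ?case using ge[of "(F ^^ n) x"] le[of "(F ^^ n) x"] by simp
qed simp

lemma funpow_diff_le: "(F ^^ n) y - (F ^^ n) x \<le> y - x + 1"
proof -
  define k where "k = ceiling (y - x)"
  have k: "y \<le> x + of_int k" "of_int k \<le> y - x + 1"
    using ceiling_correct[of "y - x"] unfolding k_def by linarith+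
  have "(F ^^ n) y \<le> (F ^^ n) x + of_int k"
    using funpow_mono[OF k(1)] by (simp add: funpow_add_of_int)
  then show ?thesis using k(2) by linarith
qed

lemma rotation_number_periodic_orbit:
  assumes q: "q > 0" and orbit: "(F ^^ q) t0 = t0 + of_int p"
  shows "(\<lambda>n. (F ^^ n) 0 / real n) \<longlonglongrightarrow> of_int p / real q"
proof (rule LIMSEQ_div_of_nat_if_bounded_deviation)
  have turns: "(F ^^ (q * m)) t0 = t0 + of_int (p * int m)" for m
  proof (induction m)
    case (Suc m)
    have "(F ^^ (q * Suc m)) t0 = (F ^^ q) (t0 + of_int (p * int m))"
      using Suc by (simp only: mult_Suc_right funpow_add comp_apply)
    also have "\<dots> = t0 + of_int p + of_int (p * int m)"
      by (simp only: funpow_add_of_int orbit)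
    finally show ?case by (simp add: algebra_simps)
  qed simp
  fix n
  define m j where "m = n div q" and "j = n mod q"
  have n: "n = j + q * m" and "j < q"
    using q by (simp_all add: m_def j_def)
  have "(F ^^ n) t0 = (F ^^ j) (t0 + of_int (p * int m))"
    by (simp add: n funpow_add turns)
  then have orbit_n: "t0 + of_int (p * int m) \<le> (F ^^ n) t0" "(F ^^ n) t0 \<le> t0 + of_int (p * int m) + real j"
    using funpow_bounds[of "t0 + of_int (p * int m)" j] by simp_all
  define e where "e = real j * of_int p / real q"
  have "real j * \<bar>of_int p\<bar> \<le> real q * \<bar>of_int p\<bar>"
    using \<open>j < q\<close> by (intro mult_right_mono) simp_all
  then have "\<bar>e\<bar> \<le> \<bar>of_int p\<bar>"
    using q by (simp add: e_def abs_mult abs_divide field_simps)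
  moreover have "real n * (of_int p / real q) = of_int (p * int m) + e"
    using q by (simp add: n e_def field_simps)
  moreover have "\<bar>(F ^^ n) 0 - (F ^^ n) t0\<bar> \<le> \<bar>t0\<bar> + 1"
    using funpow_diff_le[of n 0 t0] funpow_diff_le[of n t0 0] by simp
  moreover have "real j \<le> real q" using \<open>j < q\<close> by simp
  ultimately show "\<bar>(F ^^ n) 0 - real n * (of_int p / real q)\<bar> \<le> 2 * \<bar>t0\<bar> + 1 + real q + \<bar>of_int p\<bar>"
    using orbit_n abs_ge_self[of t0] abs_ge_minus_self[of t0] unfolding abs_le_iff by linarith
qed

end

lemma circle_lift_psi_lift:
  assumes A: "norm A < 1" and B: "norm B < 1" and C: "norm C < 1"
  shows "circle_lift (psi_lift (convex hull {A, B, C}))"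
proof
  show "x \<le> y \<Longrightarrow> psi_lift (convex hull {A, B, C}) x \<le> psi_lift (convex hull {A, B, C}) y" for x y
    by (rule psi_lift_mono[OF A B C])
  show "x \<le> psi_lift (convex hull {A, B, C}) x" "psi_lift (convex hull {A, B, C}) x \<le> x + 1" for x
    using psi_gap_triangle(1,2)[OF A B C, of x] by (simp_all add: psi_lift_def)
qed (rule psi_lift_add_of_int)

section \<open>Small triangles rotate too fast\<close>

lemma psi_gap_ge_arccos:
  assumes A: "norm A \<le> r" and B: "norm B \<le> r" and C: "norm C \<le> r" and r: "r < 1"
  defines "T \<equiv> convex hull {A, B, C}"
  shows "arccos r / pi \<le> psi_gap T t"
proof -
  have r0: "0 \<le> r" using A norm_ge_zero order_trans by blast
  have A1: "norm A < 1" and B1: "norm B < 1" and C1: "norm C < 1" using A B C r by auto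
  have Tr: "T \<subseteq> cball 0 r"
    unfolding T_def using A B C by (intro hull_minimal) (auto simp: convex_cball)
  define s where "s = psi_gap T t"
  have s: "0 < s" "s < 1" "\<exists>p\<in>T. side (circ t) (circ (t + s)) p = 0"
    using psi_gap_triangle[OF A1 B1 C1, of t] by (simp_all add: s_def T_def)
  then obtain p where "p \<in> T" and p0: "side (circ t) (circ (t + s)) p = 0" by blast
  then have pr: "norm p \<le> r" using Tr by auto
  obtain l where l: "p = circ t + of_real l * (circ (t + s) - circ t)"
    using chord_point_of_side_eq_0[of "circ t" "circ (t + s)" p] p0 circ_add_neq[of s t] s pr r
    by auto
  \<comment> \<open>the chord of angular length s keeps distance \<open>\<bar>cos (pi * s)\<bar>\<close> from the centre\<close>
  have "(norm p)^2 = 1 + l * (l - 1) * (4 * (sin (pi * s))^2)"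
    using norm_chord_point_sq[of "circ t" "circ (t + s)" l] l by (simp add: norm_circ_chord_sq)
  also have "\<dots> \<ge> 1 - (sin (pi * s))^2"
  proof -
    have "l * (l - 1) \<ge> - 1/4"
      using zero_le_power2[of "l - 1/2"] by (simp add: power2_eq_square algebra_simps)
    then have "l * (l - 1) * (4 * (sin (pi * s))^2) \<ge> - 1/4 * (4 * (sin (pi * s))^2)"
      by (intro mult_right_mono) auto
    then show ?thesis by simp
  qed
  finally have "(cos (pi * s))^2 \<le> (norm p)^2"
    using sin_cos_squared_add[of "pi * s"] by linarith
  also have "\<dots> \<le> r^2" using pr by (simp add: power_mono)
  finally have "cos (pi * s) \<le> cos (arccos r)"
    using r0 r power2_le_imp_le by simp
  then have "arccos r \<le> pi * s"
    using cos_mono_le_eq[of "pi * s" "arccos r"] arccos_bounded[of r] r0 r s by auto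
  then show ?thesis by (simp add: s_def field_simps)
qed

lemma not_rotation_third_if_small:
  assumes A: "norm A \<le> r" and B: "norm B \<le> r" and C: "norm C \<le> r" and r: "r < 1/2"
  shows "\<not> has_rotation_number (convex hull {A, B, C}) (1/3)"
proof
  assume "has_rotation_number (convex hull {A, B, C}) (1/3)"
  then have "arccos r / pi \<le> 1/3"
    using psi_gap_ge_arccos[OF A B C] r
    by (intro rotation_number_ge_displacement[of "arccos r / pi" "psi_lift (convex hull {A, B, C})"])
      (simp_all add: psi_lift_def has_rotation_number_def)
  moreover have "arccos (1/2) < arccos r"
    using A r norm_ge_zero[of A] by (intro arccos_less_arccos) linarith+
  moreover have "arccos (1/2) = pi / 3"
    using arccos_cos[of "pi/3"] cos_60 by simp
  ultimately show False by (simp add: field_simps)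
qed

section \<open>Closed chord cycles and three-periodic orbits\<close>

lemma chord_end_frac:
  assumes "D \<noteq> 0"
  shows "chord_end X (N / D) = (X * D - N) / (D - cnj X * N)"
proof (cases "D - cnj X * N = 0")
  case True
  then have "1 - cnj X * (N / D) = 0" using assms by (simp add: field_simps)
  then show ?thesis using True by (simp add: chord_end_def)
next
  case False
  then have "1 - cnj X * (N / D) \<noteq> 0" using assms by (simp add: field_simps)
  then show ?thesis unfolding chord_end_def using assms False by (simp add: field_simps)
qed

text \<open>Clearing denominators in \<open>chord_end A2 (chord_end A1 (chord_end A0 w)) = w\<close> for
  \<open>w\<close> on the circle leaves the real-linear equation \<open>Re (cnj b * w) = - Re a\<close> with
  the following coefficients.\<close>

definition cycle_coeff_a :: "complex \<Rightarrow> complex \<Rightarrow> complex \<Rightarrow> complex" where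
  "cycle_coeff_a A0 A1 A2 = -1 + A1 * cnj A0 + A2 * cnj A1 - A2 * cnj A0"

definition cycle_coeff_b :: "complex \<Rightarrow> complex \<Rightarrow> complex \<Rightarrow> complex" where
  "cycle_coeff_b A0 A1 A2 = A0 - A1 + A2 - A2 * cnj A1 * A0"

lemma Im_cycle_coeff_a: "Im (cycle_coeff_a A0 A1 A2) = side A0 A1 A2"
  by (simp add: cycle_coeff_a_def side_def algebra_simps)

lemma norm_cycle_coeffs:
  "(cmod (cycle_coeff_a A0 A1 A2))^2 - (cmod (cycle_coeff_b A0 A1 A2))^2
     = (1 - (cmod A0)^2) * (1 - (cmod A1)^2) * (1 - (cmod A2)^2)"
  unfolding cmod_power2 cycle_coeff_a_def cycle_coeff_b_def by (simp add: power2_eq_square algebra_simps)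

lemma chord_end_cycle:
  assumes A: "norm A0 < 1" "norm A1 < 1" "norm A2 < 1" and w: "norm w = 1"
    and eq: "Re (cnj (cycle_coeff_b A0 A1 A2) * w) = - Re (cycle_coeff_a A0 A1 A2)"
  shows "chord_end A2 (chord_end A1 (chord_end A0 w)) = w"
proof -
  define a b where "a = cycle_coeff_a A0 A1 A2" and "b = cycle_coeff_b A0 A1 A2"
  define N1 D1 where "N1 = A0 - w" and "D1 = 1 - cnj A0 * w"
  define N2 D2 where "N2 = A1 * D1 - N1" and "D2 = D1 - cnj A1 * N1"
  define N3 D3 where "N3 = A2 * D2 - N2" and "D3 = D2 - cnj A2 * N2"
  have "norm (cnj A0 * w) < 1" using A(1) w by (simp add: norm_mult)
  then have D1: "D1 \<noteq> 0" by (auto simp: D1_def)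
  have e1: "chord_end A0 w = N1 / D1" by (simp add: chord_end_def N1_def D1_def)
  have e2: "chord_end A1 (chord_end A0 w) = N2 / D2"
    unfolding e1 chord_end_frac[OF D1] by (simp add: N2_def D2_def)
  have "norm (chord_end A1 (chord_end A0 w)) = 1"
    using chord_end_props(1)[OF chord_end_props(1)[OF w A(1)] A(2)] .
  then have D2: "D2 \<noteq> 0" using e2 by auto
  have e3: "chord_end A2 (chord_end A1 (chord_end A0 w)) = N3 / D3"
    unfolding e2 chord_end_frac[OF D2] by (simp add: N3_def D3_def)
  have "norm (chord_end A2 (chord_end A1 (chord_end A0 w))) = 1"
    by (intro chord_end_props(1) A) (intro chord_end_props(1) A w)+
  then have D3: "D3 \<noteq> 0" using e3 by auto
  have ww: "w * cnj w = 1"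
    using w by (metis complex_norm_square norm_one of_real_1 power_one)
  have eq': "Re (cnj b * w) = - Re a" using eq by (simp add: a_def b_def)
  have "cnj b * w + b * cnj w + (a + cnj a) = of_real (2 * (Re (cnj b * w) + Re a))"
    by (simp add: complex_eq_iff)
  then have "w * (cnj b * w + b * cnj w + (a + cnj a)) = 0"
    by (simp only: eq') simp
  then have quadratic: "cnj b * w * w + (a + cnj a) * w + b = 0"
    using ww by (simp add: algebra_simps)
  have "N3 - w * D3 = cnj b * w * w + (a + cnj a) * w + b"
    unfolding N3_def D3_def N2_def D2_def N1_def D1_def a_def b_def cycle_coeff_a_def cycle_coeff_b_def
    by (simp only: complex_cnj_diff complex_cnj_add complex_cnj_mult complex_cnj_cnj
        complex_cnj_one complex_cnj_minus) algebra
  then show ?thesis using quadratic e3 D3 by simp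
qed

lemma exists_unit_Re_cnj_mult_eq:
  assumes "\<bar>c\<bar> \<le> cmod b"
  shows "\<exists>w. norm w = 1 \<and> Re (cnj b * w) = c"
proof (cases "b = 0")
  case True
  then show ?thesis using assms by (intro exI[of _ 1]) simp
next
  case False
  define x where "x = c / cmod b"
  have "c^2 \<le> (cmod b)^2"
    using power_mono[OF assms, of 2] by simp
  then have "x^2 \<le> 1"
    using False by (simp add: x_def power_divide)
  define z where "z = Complex x (sqrt (1 - x^2))"
  have z: "norm z = 1" using \<open>x^2 \<le> 1\<close> by (simp add: z_def cmod_def)
  define w where "w = b / of_real (cmod b) * z"
  have "norm w = 1" using False z by (simp add: w_def norm_mult norm_divide)
  moreover have "b * cnj b = of_real (cmod b) * of_real (cmod b)"
    using complex_norm_square[of b] by (simp add: power2_eq_square)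
  then have "cnj b * w = of_real (cmod b) * z"
    using False by (simp add: w_def field_simps)
  ultimately show ?thesis
    using False by (intro exI[of _ w]) (simp add: z_def x_def)
qed

lemma exists_closed_chord_cycle:
  assumes A: "norm A0 < 1" "norm A1 < 1" "norm A2 < 1"
    and ineq: "(1 - (cmod A0)^2) * (1 - (cmod A1)^2) * (1 - (cmod A2)^2) \<le> (side A0 A1 A2)^2"
  shows "\<exists>w. norm w = 1 \<and> chord_end A2 (chord_end A1 (chord_end A0 w)) = w"
proof -
  define a b where "a = cycle_coeff_a A0 A1 A2" and "b = cycle_coeff_b A0 A1 A2"
  have "(Re a)^2 + (side A0 A1 A2)^2 - (cmod b)^2 = (1 - (cmod A0)^2) * (1 - (cmod A1)^2) * (1 - (cmod A2)^2)"
    using norm_cycle_coeffs[of A0 A1 A2] Im_cycle_coeff_a[of A0 A1 A2]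
    by (simp add: a_def b_def cmod_power2)
  then have "(Re a)^2 \<le> (cmod b)^2" using ineq by linarith
  then have "\<bar>- Re a\<bar> \<le> cmod b"
    using abs_le_square_iff[of "Re a" "cmod b"] by simp
  then obtain w where "norm w = 1" "Re (cnj b * w) = - Re a"
    using exists_unit_Re_cnj_mult_eq by blast
  then show ?thesis
    using chord_end_cycle[OF A] by (auto simp: a_def b_def)
qed

lemma convex_hull_left_of_chord:
  assumes "A0 = v0 + of_real l0 * (v1 - v0)" "A1 = v1 + of_real l1 * (v2 - v1)"
    "A2 = v2 + of_real l2 * (v0 - v2)" "0 \<le> l1" "l2 \<le> 1" "side v0 v1 v2 \<ge> 0"
  shows "\<forall>p\<in>convex hull {A0, A1, A2}. side v0 v1 p \<ge> 0"
proof -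
  have "side v0 v1 A0 = 0" "side v0 v1 A1 = l1 * side v0 v1 v2" "side v0 v1 A2 = (1 - l2) * side v0 v1 v2"
    unfolding assms(1-3) side_affine by (simp_all add: side_def algebra_simps)
  then show ?thesis
    using side_nonneg_convex_hull3[of v0 v1 A0 A1 A2] assms(4-6) by simp
qed

lemma arcs_sum_eq_one:
  assumes s: "0 < s0" "s0 < 1" "0 < s1" "s1 < 1" "0 < s2" "s2 < 1"
    and pos: "side (circ t) (circ (t + s0)) (circ (t + s0 + s1)) > 0"
    and closed: "circ (t + s0 + s1 + s2) = circ t"
  shows "s0 + s1 + s2 = 1"
proof -
  have "side (circ t) (circ (t + s0)) (circ (t + s0 + s1))
      = (4 * sin (pi * s0) * sin (pi * s1)) * sin (pi * (s0 + s1))"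
    using side_circ_shift[of t s0 "s0 + s1"] by (simp add: add.assoc)
  moreover have "0 < 4 * sin (pi * s0) * sin (pi * s1)"
    using sin_pi_mult_pos s by simp
  ultimately have sin_pos: "0 < sin (pi * (s0 + s1))"
    using pos zero_less_mult_pos by metis
  have "s0 + s1 < 1"
  proof (rule ccontr)
    assume "\<not> s0 + s1 < 1"
    then have "0 \<le> sin (pi * (s0 + s1 - 1))"
      using s by (intro sin_pi_mult_nonneg) auto
    moreover have "sin (pi * (s0 + s1)) = - sin (pi * (s0 + s1 - 1))"
      using sin_periodic_pi[of "pi * (s0 + s1 - 1)"] by (simp add: algebra_simps)
    ultimately show False using sin_pos by simp
  qed
  obtain k :: int where "t + s0 + s1 + s2 - t = of_int k"
    using circ_eq_imp_diff_int[OF closed] by blast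
  then have k: "s0 + s1 + s2 = of_int k" by simp
  then have "0 < k" "k < 2"
    using s \<open>s0 + s1 < 1\<close> by simp_all
  then show ?thesis using k by simp
qed

lemma chord_triangle_around:
  assumes A: "norm A0 < 1" "norm A1 < 1" "norm A2 < 1" and S: "side A0 A1 A2 > 0"
    and ineq: "(1 - (cmod A0)^2) * (1 - (cmod A1)^2) * (1 - (cmod A2)^2) \<le> (side A0 A1 A2)^2"
  defines "T \<equiv> convex hull {A0, A1, A2}"
  obtains v0 v1 v2 where "norm v0 = 1" "norm v1 = 1" "norm v2 = 1"
    "v1 \<noteq> v0" "v2 \<noteq> v1" "v0 \<noteq> v2" "side v0 v1 v2 > 0"
    "side v0 v1 A0 = 0" "side v1 v2 A1 = 0" "side v2 v0 A2 = 0"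
    "\<forall>p\<in>T. side v0 v1 p \<ge> 0" "\<forall>p\<in>T. side v1 v2 p \<ge> 0" "\<forall>p\<in>T. side v2 v0 p \<ge> 0"
proof -
  obtain v0 where n0: "norm v0 = 1" and closed: "chord_end A2 (chord_end A1 (chord_end A0 v0)) = v0"
    using exists_closed_chord_cycle[OF A ineq] by blast
  define v1 v2 where "v1 = chord_end A0 v0" and "v2 = chord_end A1 v1"
  have n1: "norm v1 = 1" and d01: "v1 \<noteq> v0" and z0: "side v0 v1 A0 = 0"
    using chord_end_props[OF n0 A(1)] by (simp_all add: v1_def)
  have n2: "norm v2 = 1" and d12: "v2 \<noteq> v1" and z1: "side v1 v2 A1 = 0"
    using chord_end_props[OF n1 A(2)] by (simp_all add: v2_def)
  have d20: "v0 \<noteq> v2" and z2: "side v2 v0 A2 = 0"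
    using chord_end_props(2,3)[OF n2 A(3)] closed by (simp_all add: v1_def v2_def)
  obtain l0 where l0: "0 < l0" "l0 < 1" "A0 = v0 + of_real l0 * (v1 - v0)"
    using chord_point_of_side_eq_0[OF n0 n1 d01[symmetric] z0 A(1)] by blast
  obtain l1 where l1: "0 < l1" "l1 < 1" "A1 = v1 + of_real l1 * (v2 - v1)"
    using chord_point_of_side_eq_0[OF n1 n2 d12[symmetric] z1 A(2)] by blast
  obtain l2 where l2: "0 < l2" "l2 < 1" "A2 = v2 + of_real l2 * (v0 - v2)"
    using chord_point_of_side_eq_0[OF n2 n0 d20[symmetric] z2 A(3)] by blast
  have "side A0 A1 A2 = side v0 v1 v2 * (l0 * l1 * l2 + (1 - l0) * (1 - l1) * (1 - l2))"
    unfolding l0(3) l1(3) l2(3) by (rule side_of_points_on_edges)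
  moreover have "l0 * l1 * l2 + (1 - l0) * (1 - l1) * (1 - l2) > 0"
    using l0 l1 l2 by (simp add: add_pos_pos)
  ultimately have sv: "side v0 v1 v2 > 0" using S by (simp add: zero_less_mult_iff)
  have hull_rot: "convex hull {A1, A2, A0} = T" "convex hull {A2, A0, A1} = T"
    by (simp_all add: T_def insert_commute)
  have L0: "\<forall>p\<in>T. side v0 v1 p \<ge> 0"
    using convex_hull_left_of_chord[OF l0(3) l1(3) l2(3)] l1(1) l2(2) sv by (simp add: T_def)
  have L1: "\<forall>p\<in>T. side v1 v2 p \<ge> 0"
    using convex_hull_left_of_chord[OF l1(3) l2(3) l0(3)] l2(1) l0(2) sv side_rotate[of v0 v1 v2]
    by (simp add: hull_rot)
  have L2: "\<forall>p\<in>T. side v2 v0 p \<ge> 0"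
    using convex_hull_left_of_chord[OF l2(3) l0(3) l1(3)] l0(1) l1(2) sv side_rotate[of v1 v2 v0]
      side_rotate[of v0 v1 v2] by (simp add: hull_rot)
  show ?thesis
    by (rule that[OF n0 n1 n2 d01 d12 d20 sv z0 z1 z2 L0 L1 L2])
qed

lemma psi_lift_three_periodic:
  assumes A: "norm A0 < 1" "norm A1 < 1" "norm A2 < 1" and S: "side A0 A1 A2 > 0"
    and ineq: "(1 - (cmod A0)^2) * (1 - (cmod A1)^2) * (1 - (cmod A2)^2) \<le> (side A0 A1 A2)^2"
  defines "T \<equiv> convex hull {A0, A1, A2}"
  shows "\<exists>t. (psi_lift T ^^ 3) t = t + 1"
proof -
  obtain v0 v1 v2 where n: "norm v0 = 1" "norm v1 = 1" "norm v2 = 1"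
    and d: "v1 \<noteq> v0" "v2 \<noteq> v1" "v0 \<noteq> v2" and sv: "side v0 v1 v2 > 0"
    and z: "side v0 v1 A0 = 0" "side v1 v2 A1 = 0" "side v2 v0 A2 = 0"
    and L: "\<forall>p\<in>T. side v0 v1 p \<ge> 0" "\<forall>p\<in>T. side v1 v2 p \<ge> 0" "\<forall>p\<in>T. side v2 v0 p \<ge> 0"
    using chord_triangle_around[OF A S ineq] unfolding T_def by blast
  have inT: "A0 \<in> T" "A1 \<in> T" "A2 \<in> T" by (simp_all add: T_def hull_inc)
  have TD: "T \<subseteq> ball 0 1" using convex_hull3_subset_ball[OF A] by (simp add: T_def)
  obtain t where t: "circ t = v0" using circ_surj[OF n(1)] by blast
  obtain s0 where s0: "0 < s0" "s0 < 1" "circ (t + s0) = v1"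
    using circ_reaches[OF n(2)] d(1) t by force
  obtain s1 where s1: "0 < s1" "s1 < 1" "circ (t + s0 + s1) = v2"
    using circ_reaches[OF n(3)] d(2) s0(3) by force
  obtain s2 where s2: "0 < s2" "s2 < 1" "circ (t + s0 + s1 + s2) = v0"
    using circ_reaches[OF n(1)] d(3) s1(3) by force
  have "s0 + s1 + s2 = 1"
    by (rule arcs_sum_eq_one[OF s0(1,2) s1(1,2) s2(1,2), of t]) (use sv t s0(3) s1(3) s2(3) in simp_all)
  moreover have "psi_gap T t = s0"
    by (rule psi_gap_eqI[OF TD s0(1,2)]) (use L(1) z(1) inT t s0(3) in auto)
  moreover have "psi_gap T (t + s0) = s1"
    by (rule psi_gap_eqI[OF TD s1(1,2)]) (use L(2) z(2) inT s0(3) s1(3) in auto)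
  moreover have "psi_gap T (t + s0 + s1) = s2"
    by (rule psi_gap_eqI[OF TD s2(1,2)]) (use L(3) z(3) inT s1(3) s2(3) in auto)
  ultimately have "(psi_lift T ^^ 3) t = t + 1"
    by (simp add: numeral_3_eq_3 psi_lift_def add.assoc)
  then show ?thesis by blast
qed

section \<open>Equilateral triangles\<close>

definition equilateral :: "real \<Rightarrow> complex \<Rightarrow> complex \<Rightarrow> complex \<Rightarrow> bool" where
  "equilateral L P Q R \<longleftrightarrow> dist P Q = L \<and> dist Q R = L \<and> dist R P = L"

lemma equilateral_rotate: "equilateral L P Q R \<Longrightarrow> equilateral L Q R P"
  by (auto simp: equilateral_def)

lemma equilateral_swap: "equilateral L P Q R \<Longrightarrow> equilateral L P R Q"
  by (auto simp: equilateral_def dist_commute)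

lemma dist_power2: "(dist x y)^2 = (Re x - Re y)^2 + (Im x - Im y)^2"
  by (simp add: dist_norm cmod_power2)

lemma equilateral_side_sq:
  assumes "equilateral L P Q R"
  shows "(side P Q R)^2 = 3/4 * L^4"
proof -
  define x1 y1 x2 y2 where "x1 = Re Q - Re P" and "y1 = Im Q - Im P"
    and "x2 = Re R - Re P" and "y2 = Im R - Im P"
  have h1: "x1^2 + y1^2 = L^2" and h2: "x2^2 + y2^2 = L^2" and h3: "(x2 - x1)^2 + (y2 - y1)^2 = L^2"
    using assms dist_power2[of P Q] dist_power2[of R P] dist_power2[of Q R]
    by (simp_all add: equilateral_def x1_def y1_def x2_def y2_def power2_commute)
  have s: "side P Q R = x1 * y2 - y1 * x2"
    by (simp add: side_def x1_def y1_def x2_def y2_def algebra_simps)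
  have dot: "x1 * x2 + y1 * y2 = L^2 / 2"
    using h1 h2 h3 by (simp add: power2_eq_square algebra_simps)
  have "(x1 * y2 - y1 * x2)^2 = (x1^2 + y1^2) * (x2^2 + y2^2) - (x1 * x2 + y1 * y2)^2"
    by (simp add: power2_eq_square algebra_simps)
  also have "\<dots> = L^2 * L^2 - (L^2 / 2)^2"
    by (simp only: h1 h2 dot)
  also have "\<dots> = 3/4 * L^4"
    by (simp add: power2_eq_square power4_eq_xxxx field_simps)
  finally show ?thesis using s by simp
qed

lemma equilateral_nondegenerate: "equilateral L P Q R \<Longrightarrow> L > 0 \<Longrightarrow> nondegenerate P Q R"
  using equilateral_side_sq collinear_imp_side_eq_0 by (fastforce simp: nondegenerate_def)

lemma inner_diff_law_of_cosines:
  fixes P Q R :: complex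
  shows "(Q - P) \<bullet> (R - P) = ((dist P Q)^2 + (dist R P)^2 - (dist Q R)^2) / 2"
  unfolding dist_power2 inner_complex_def by (simp add: power2_eq_square algebra_simps)

lemma equilateral_acute:
  assumes "equilateral L P Q R" "L > 0"
  shows "acute P Q R"
proof -
  have i1: "(Q - P) \<bullet> (R - P) = L^2 / 2" and i2: "(P - Q) \<bullet> (R - Q) = L^2 / 2"
    using inner_diff_law_of_cosines[where P=P and Q=Q and R=R]
      inner_diff_law_of_cosines[where P=Q and Q=P and R=R] assms(1)
    by (simp_all add: equilateral_def dist_commute)
  have "(Q - R) \<bullet> (P - R) = L^2 / 2"
    using inner_diff_law_of_cosines[where P=R and Q=Q and R=P] assms(1) by (simp add: equilateral_def dist_commute)
  then have i3: "(P - R) \<bullet> (Q - R) = L^2 / 2"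
    by (simp add: inner_commute)
  show ?thesis
    unfolding acute_def i1 i2 i3 using assms(2) by simp
qed

lemma dist_centroid_power2:
  fixes P Q R :: complex
  shows "9 * (dist P ((P + Q + R) / 3))^2 = 2 * (dist P Q)^2 + 2 * (dist P R)^2 - (dist Q R)^2"
  unfolding dist_power2 by (simp add: power2_eq_square field_simps)

lemma equilateral_dist_centroid:
  assumes "equilateral L P Q R"
  shows "dist P ((P + Q + R) / 3) = L / sqrt 3"
proof -
  have "L \<ge> 0" using assms by (auto simp: equilateral_def)
  have "(dist P ((P + Q + R) / 3))^2 = (L / sqrt 3)^2"
    using dist_centroid_power2[of P Q R] assms by (simp add: equilateral_def dist_commute power_divide)
  then show ?thesis using \<open>L \<ge> 0\<close> by (simp add: power2_eq_iff_nonneg)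
qed

lemma equilateral_dist_centroid_all:
  assumes "equilateral L P Q R" and "X \<in> {P, Q, R}"
  shows "dist X ((P + Q + R) / 3) = L / sqrt 3"
  using assms equilateral_dist_centroid[of L P Q R] equilateral_dist_centroid[of L Q R P]
    equilateral_dist_centroid[of L R P Q] equilateral_rotate[of L P Q R]
    equilateral_rotate[of L Q R P]
  by (auto simp: add_ac)

lemma equidistant_eq_centroid:
  assumes E: "equilateral L P Q R" and L: "L > 0"
    and C: "dist C P = r" "dist C Q = r" "dist C R = r"
  shows "C = (P + Q + R) / 3"
proof -
  define g where "g = (P + Q + R) / 3"
  have g: "dist g X = L / sqrt 3" if "X \<in> {P, Q, R}" for X
    using equilateral_dist_centroid_all[OF E that] by (simp add: g_def dist_commute)
  \<comment> \<open>both C and g lie on the perpendicular bisectors of PQ and PR\<close>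
  define dx dy a1 a2 b1 b2 where "dx = Re C - Re g" and "dy = Im C - Im g"
    and "a1 = Re Q - Re P" and "a2 = Im Q - Im P" and "b1 = Re R - Re P" and "b2 = Im R - Im P"
  have "(Re C - Re P)^2 + (Im C - Im P)^2 = (Re C - Re Q)^2 + (Im C - Im Q)^2"
       "(Re g - Re P)^2 + (Im g - Im P)^2 = (Re g - Re Q)^2 + (Im g - Im Q)^2"
    using C g[of P] g[of Q] by (simp_all add: dist_power2[symmetric])
  then have l1: "dx * a1 + dy * a2 = 0"
    unfolding dx_def dy_def a1_def a2_def by algebra
  have "(Re C - Re P)^2 + (Im C - Im P)^2 = (Re C - Re R)^2 + (Im C - Im R)^2"
       "(Re g - Re P)^2 + (Im g - Im P)^2 = (Re g - Re R)^2 + (Im g - Im R)^2"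
    using C g[of P] g[of R] by (simp_all add: dist_power2[symmetric])
  then have l2: "dx * b1 + dy * b2 = 0"
    unfolding dx_def dy_def b1_def b2_def by algebra
  have "a1 * b2 - a2 * b1 \<noteq> 0"
    using equilateral_side_sq[OF E] L
    by (auto simp: side_def a1_def a2_def b1_def b2_def algebra_simps)
  moreover have "dx * (a1 * b2 - a2 * b1) = 0" "dy * (a1 * b2 - a2 * b1) = 0"
    using l1 l2 by algebra+
  ultimately have "dx = 0" "dy = 0" by simp_all
  then show ?thesis by (simp add: dx_def dy_def g_def complex_eq_iff)
qed

lemma equilateral_circumradius:
  assumes E: "equilateral L P Q R" and L: "L > 0"
  shows "circumradius P Q R = L / sqrt 3"
  unfolding circumradius_def
proof (rule the_equality)
  show "\<exists>C. dist C P = L / sqrt 3 \<and> dist C Q = L / sqrt 3 \<and> dist C R = L / sqrt 3"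
    using equilateral_dist_centroid_all[OF E] by (metis dist_commute insertCI)
next
  fix r assume "\<exists>C. dist C P = r \<and> dist C Q = r \<and> dist C R = r"
  then obtain C where "dist C P = r" "dist C Q = r" "dist C R = r" by blast
  moreover from this have "C = (P + Q + R) / 3"
    using equidistant_eq_centroid[OF E L] by blast
  ultimately show "r = L / sqrt 3"
    using equilateral_dist_centroid[OF E] by (simp add: dist_commute)
qed

lemma equilateral_kappa: "equilateral L P Q R \<Longrightarrow> L > 0 \<Longrightarrow> kappa P Q R = L / sqrt 3"
  by (simp add: kappa_def equilateral_acute equilateral_circumradius)

lemma equilateral_sum_norm_power2_ge:
  assumes "equilateral L A0 A1 A2"
  shows "L^2 \<le> (cmod A0)^2 + (cmod A1)^2 + (cmod A2)^2"
proof -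
  have "3 * ((cmod A0)^2 + (cmod A1)^2 + (cmod A2)^2) =
     (cmod (A0 + A1 + A2))^2 + (dist A0 A1)^2 + (dist A1 A2)^2 + (dist A2 A0)^2"
    unfolding cmod_power2 dist_power2 by (simp add: power2_eq_square algebra_simps)
  also have "\<dots> = (cmod (A0 + A1 + A2))^2 + 3 * L^2"
    using assms by (simp add: equilateral_def)
  finally show ?thesis
    using zero_le_power2[of "cmod (A0 + A1 + A2)"] by (smt (verit))
qed

lemma arith_geo_mean3:
  fixes a b c :: real
  assumes "0 \<le> a" "0 \<le> b" "0 \<le> c"
  shows "27 * (a * b * c) \<le> (a + b + c)^3"
proof -
  have e: "2 * ((a + b + c)^3 - 27 * (a * b * c)) =
      (a + b + c) * ((a - b)^2 + (b - c)^2 + (c - a)^2) + 6 * (a * (b - c)^2 + b * (c - a)^2 + c * (a - b)^2)"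
    by (simp add: power2_eq_square power3_eq_cube algebra_simps)
  have "0 \<le> (a + b + c) * ((a - b)^2 + (b - c)^2 + (c - a)^2)"
    "0 \<le> a * (b - c)^2 + b * (c - a)^2 + c * (a - b)^2"
    using assms by simp_all
  then have "0 \<le> 2 * ((a + b + c)^3 - 27 * (a * b * c))"
    unfolding e by simp
  then show ?thesis by simp
qed

text \<open>For side length \<open>sqrt 3 / 2\<close> both sides equal \<open>27/64\<close> at the centred position,
  so the bound is sharp.\<close>

lemma equilateral_disk_product_le:
  assumes A: "norm A0 < 1" "norm A1 < 1" "norm A2 < 1"
    and E: "equilateral (sqrt 3 / 2) A0 A1 A2"
  shows "(1 - (cmod A0)^2) * (1 - (cmod A1)^2) * (1 - (cmod A2)^2) \<le> (side A0 A1 A2)^2"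
proof -
  define y0 y1 y2 where "y0 = 1 - (cmod A0)^2" and "y1 = 1 - (cmod A1)^2" and "y2 = 1 - (cmod A2)^2"
  have y: "0 \<le> y0" "0 \<le> y1" "0 \<le> y2"
    using A by (simp_all add: y0_def y1_def y2_def power_le_one)
  have "y0 + y1 + y2 \<le> 9/4"
    using equilateral_sum_norm_power2_ge[OF E] by (simp add: y0_def y1_def y2_def power_divide)
  then have "(y0 + y1 + y2)^3 \<le> (9/4)^3"
    using y by (intro power_mono) auto
  then have "y0 * y1 * y2 \<le> 27/64"
    using arith_geo_mean3[OF y] by (simp add: power3_eq_cube)
  moreover have "(side A0 A1 A2)^2 = 27/64"
    using equilateral_side_sq[OF E] by (simp add: power_divide power4_eq_xxxx)
  ultimately show ?thesis by (simp add: y0_def y1_def y2_def)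
qed

lemma rotation_third_if_equilateral:
  assumes A: "norm A0 < 1" "norm A1 < 1" "norm A2 < 1"
    and E: "equilateral (sqrt 3 / 2) A0 A1 A2"
  shows "has_rotation_number (convex hull {A0, A1, A2}) (1/3)"
proof -
  have "side A0 A1 A2 \<noteq> 0"
    using equilateral_side_sq[OF E] by auto
  then consider "side A0 A1 A2 > 0" | "side A0 A2 A1 > 0"
    using side_swap[of A0 A1 A2] by linarith
  then obtain t where "(psi_lift (convex hull {A0, A1, A2}) ^^ 3) t = t + 1"
  proof cases
    case 1
    then show ?thesis
      using that psi_lift_three_periodic[OF A 1 equilateral_disk_product_le[OF A E]] by blast
  next
    case 2
    have "{A0, A2, A1} = {A0, A1, A2}" by auto
    then show ?thesis
      using that psi_lift_three_periodic[OF A(1,3,2) 2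
          equilateral_disk_product_le[OF A(1,3,2) equilateral_swap[OF E]]]
      by auto
  qed
  then have "(\<lambda>n. (psi_lift (convex hull {A0, A1, A2}) ^^ n) 0 / real n) \<longlonglongrightarrow> of_int 1 / real 3"
    by (intro circle_lift.rotation_number_periodic_orbit[OF circle_lift_psi_lift[OF A]]) simp_all
  then show ?thesis by (simp add: has_rotation_number_def)
qed

section \<open>Similar copies of an equilateral triangle\<close>

lemma convex_hull3_dist_le:
  fixes A B C :: "'a::real_normed_vector"
  assumes "\<And>V W. V \<in> {A, B, C} \<Longrightarrow> W \<in> {A, B, C} \<Longrightarrow> dist V W \<le> m"
    and x: "x \<in> convex hull {A, B, C}" and y: "y \<in> convex hull {A, B, C}"
  shows "dist x y \<le> m"
proof -
  have "convex hull {A, B, C} \<subseteq> cball V m" if "V \<in> {A, B, C}" for V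
    using assms(1) that by (intro hull_minimal) (auto simp: convex_cball)
  then have "convex hull {A, B, C} \<subseteq> cball y m"
    using y by (intro hull_minimal) (auto simp: convex_cball dist_commute subset_iff)
  then show ?thesis using x by (auto simp: dist_commute)
qed

lemma convex_hull3_diameter_point_is_vertex:
  fixes A B C :: complex
  assumes diam: "\<And>p q. p \<in> convex hull {A, B, C} \<Longrightarrow> q \<in> convex hull {A, B, C} \<Longrightarrow> dist p q \<le> m"
    and x: "x \<in> convex hull {A, B, C}" and y: "y \<in> convex hull {A, B, C}" and xy: "dist x y = m"
  shows "x \<in> {A, B, C}"
proof -
  obtain u v w where uvw: "0 \<le> u" "0 \<le> v" "0 \<le> w" "u + v + w = 1"
    and xe: "x = u *\<^sub>R A + v *\<^sub>R B + w *\<^sub>R C"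
    using x unfolding convex_hull_3 by blast
  \<comment> \<open>parallel axis theorem for the weights u, v, w, coordinatewise\<close>
  have parallel_axis: "u * (a - z)^2 + v * (b - z)^2 + w * (c - z)^2 =
      ((u * a + v * b + w * c) - z)^2 + u * (a - (u * a + v * b + w * c))^2
      + v * (b - (u * a + v * b + w * c))^2 + w * (c - (u * a + v * b + w * c))^2" for a b c z :: real
    using uvw(4) by algebra
  have "Re x = u * Re A + v * Re B + w * Re C" "Im x = u * Im A + v * Im B + w * Im C"
    by (simp_all add: xe)
  then have "u * (cmod (A - y))^2 + v * (cmod (B - y))^2 + w * (cmod (C - y))^2 =
     (cmod (x - y))^2 + u * (cmod (A - x))^2 + v * (cmod (B - x))^2 + w * (cmod (C - x))^2"
    using parallel_axis[of "Re A" "Re y" "Re B" "Re C"] parallel_axis[of "Im A" "Im y" "Im B" "Im C"]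
    unfolding cmod_power2 by (simp add: distrib_left)
  moreover have "u * (cmod (A - y))^2 + v * (cmod (B - y))^2 + w * (cmod (C - y))^2 \<le> (cmod (x - y))^2"
  proof -
    have "(cmod (X - y))^2 \<le> m^2" if "X \<in> {A, B, C}" for X
      using diam[OF hull_inc[OF that] y] xy by (simp add: dist_norm power_mono)
    then have "u * (cmod (A - y))^2 + v * (cmod (B - y))^2 + w * (cmod (C - y))^2 \<le> u * m^2 + v * m^2 + w * m^2"
      using uvw by (intro add_mono mult_left_mono) auto
    also have "\<dots> = (cmod (x - y))^2"
      using uvw(4) xy by (simp add: dist_norm flip: distrib_right)
    finally show ?thesis .
  qed
  ultimately have "u * (cmod (A - x))^2 + v * (cmod (B - x))^2 + w * (cmod (C - x))^2 \<le> 0"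
    by linarith
  moreover have "0 \<le> u * (cmod (A - x))^2" "0 \<le> v * (cmod (B - x))^2" "0 \<le> w * (cmod (C - x))^2"
    using uvw by simp_all
  ultimately have "u * (cmod (A - x))^2 = 0" "v * (cmod (B - x))^2 = 0" "w * (cmod (C - x))^2 = 0"
    by linarith+
  then show ?thesis using uvw(4) by auto
qed

lemma similar_image_of_equilateral:
  fixes A B C P Q R :: complex and f :: "complex \<Rightarrow> complex"
  assumes c: "c > 0" and f: "\<And>x y. dist (f x) (f y) = c * dist x y"
    and img: "f ` (convex hull {A, B, C}) = convex hull {P, Q, R}"
    and E: "equilateral L P Q R" and L: "L > 0"
  shows "equilateral (L / c) A B C"
proof -
  define m where "m = L / c"
  have m: "m > 0" using c L by (simp add: m_def)
  have vertices: "dist V W \<le> L" if "V \<in> {P, Q, R}" "W \<in> {P, Q, R}" for V W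
    using E L that by (auto simp: equilateral_def dist_commute)
  have diam: "dist p q \<le> m" if "p \<in> convex hull {A, B, C}" "q \<in> convex hull {A, B, C}" for p q
  proof -
    have "f p \<in> convex hull {P, Q, R}" "f q \<in> convex hull {P, Q, R}"
      using that img by blast+
    then have "c * dist p q \<le> L"
      using convex_hull3_dist_le[where A=P and B=Q and C=R and m=L, OF vertices] f[of p q]
      by metis
    then show ?thesis using c by (simp add: m_def field_simps)
  qed
  \<comment> \<open>the preimages of the vertices are pairwise at the maximal distance, hence vertices\<close>
  have "P \<in> f ` (convex hull {A, B, C})" "Q \<in> f ` (convex hull {A, B, C})"
    "R \<in> f ` (convex hull {A, B, C})"
    unfolding img by (simp_all add: hull_inc)
  then obtain aP aQ aR where a: "aP \<in> convex hull {A, B, C}" "aQ \<in> convex hull {A, B, C}"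
      "aR \<in> convex hull {A, B, C}" and fa: "P = f aP" "Q = f aQ" "R = f aR"
    by blast
  have "c * dist aP aQ = L" "c * dist aQ aR = L" "c * dist aR aP = L"
    using E f[of aP aQ] f[of aQ aR] f[of aR aP] by (simp_all add: equilateral_def fa)
  then have dd: "dist aP aQ = m" "dist aQ aR = m" "dist aR aP = m"
    using c by (simp_all add: m_def field_simps)
  have v: "aP \<in> {A, B, C}" "aQ \<in> {A, B, C}" "aR \<in> {A, B, C}"
    using convex_hull3_diameter_point_is_vertex[OF diam] a dd by blast+
  have pair: "dist x y = m" if "x \<in> {aP, aQ, aR}" "y \<in> {aP, aQ, aR}" "x \<noteq> y" for x y
    using dd that by (auto simp: dist_commute)
  have "aP \<noteq> aQ" "aQ \<noteq> aR" "aR \<noteq> aP" using dd m by auto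
  then have "A \<in> {aP, aQ, aR}" "B \<in> {aP, aQ, aR}" "C \<in> {aP, aQ, aR}"
    "A \<noteq> B" "B \<noteq> C" "C \<noteq> A"
    using v by auto
  then show ?thesis
    using pair by (simp add: equilateral_def m_def)
qed

section \<open>The infimum \<open>mu\<close> for equilateral triangles\<close>

definition mu_admissible :: "complex \<Rightarrow> complex \<Rightarrow> complex \<Rightarrow> complex \<Rightarrow> complex \<Rightarrow> complex \<Rightarrow> bool" where
  "mu_admissible P Q R P' Q' R' \<longleftrightarrow>
     nondegenerate P' Q' R' \<and> tri P' Q' R' \<subseteq> unit_disk \<and> similar_tri (tri P' Q' R') (tri P Q R) \<and>
     (\<forall>P'' Q'' R''. nondegenerate P'' Q'' R'' \<and> tri P'' Q'' R'' \<subseteq> unit_disk \<and>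
        congruent_tri (tri P'' Q'' R'') (tri P' Q' R') \<longrightarrow>
        has_rotation_number (tri P'' Q'' R'') (1/3))"

lemma mu_eq_Inf_admissible:
  "mu P Q R = Inf {kappa P' Q' R' | P' Q' R'. mu_admissible P Q R P' Q' R'}"
  by (simp add: mu_def mu_admissible_def)

lemma tri_subset_unit_disk_iff: "tri P Q R \<subseteq> unit_disk \<longleftrightarrow> norm P < 1 \<and> norm Q < 1 \<and> norm R < 1"
  unfolding tri_def unit_disk_def
  by (metis convex_hull3_subset_ball hull_inc insertCI mem_ball_0 subsetD)

lemma congruent_tri_translate: "congruent_tri (tri (P - a) (Q - a) (R - a)) (tri P Q R)"
proof -
  have "(\<lambda>x. a + x) ` {P - a, Q - a, R - a} = {P, Q, R}" by auto
  then have "(\<lambda>x. a + x) ` (convex hull {P - a, Q - a, R - a}) = convex hull {P, Q, R}"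
    by (metis convex_hull_translation)
  moreover have "dist (a + x) (a + y) = dist x y" for x y :: complex
    by (simp add: dist_norm)
  ultimately show ?thesis unfolding congruent_tri_def tri_def by blast
qed

lemma similar_tri_scale:
  assumes "k > 0"
  shows "similar_tri (tri (k *\<^sub>R (P - a)) (k *\<^sub>R (Q - a)) (k *\<^sub>R (R - a))) (tri P Q R)"
proof -
  define f where "f x = a + (1/k) *\<^sub>R x" for x :: complex
  have "f ` {k *\<^sub>R (P - a), k *\<^sub>R (Q - a), k *\<^sub>R (R - a)} = {P, Q, R}"
    using assms by (simp add: f_def)
  then have "f ` (convex hull {k *\<^sub>R (P - a), k *\<^sub>R (Q - a), k *\<^sub>R (R - a)}) = convex hull {P, Q, R}"
    unfolding f_def by (metis convex_hull_affinity)
  moreover have "dist (f x) (f y) = (1/k) * dist x y" for x y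
  proof -
    have "f x - f y = (1/k) *\<^sub>R (x - y)" by (simp add: f_def algebra_simps)
    then show ?thesis using assms by (simp add: dist_norm)
  qed
  ultimately show ?thesis
    unfolding similar_tri_def tri_def using assms by (intro exI[of _ "1/k"]) auto
qed

lemma admissible_equilateral_kappa_ge:
  assumes E: "equilateral L P Q R" and L: "L > 0" and adm: "mu_admissible P Q R P' Q' R'"
  shows "1/2 \<le> kappa P' Q' R'"
proof (rule ccontr)
  obtain c f where c: "c > 0" and f: "\<And>x y. dist (f x) (f y) = c * dist x y"
    and img: "f ` (convex hull {P', Q', R'}) = convex hull {P, Q, R}"
    using adm unfolding mu_admissible_def similar_tri_def tri_def by blast
  define m where "m = L / c"
  have m: "m > 0" using L c by (simp add: m_def)
  have E': "equilateral m P' Q' R'"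
    using similar_image_of_equilateral[OF c f img E L] by (simp add: m_def)
  assume "\<not> 1/2 \<le> kappa P' Q' R'"
  then have small: "m / sqrt 3 < 1/2"
    using equilateral_kappa[OF E' m] by simp
  \<comment> \<open>the copy centred at the origin lies in the disk of radius \<open>m / sqrt 3 < 1/2\<close>\<close>
  define g where "g = (P' + Q' + R') / 3"
  have norms: "norm (X - g) = m / sqrt 3" if "X \<in> {P', Q', R'}" for X
    using equilateral_dist_centroid_all[OF E' that] by (simp add: g_def dist_norm)
  have E'': "equilateral m (P' - g) (Q' - g) (R' - g)"
    using E' by (simp add: equilateral_def dist_norm)
  have "m / sqrt 3 < 1" using small by linarith
  then have "tri (P' - g) (Q' - g) (R' - g) \<subseteq> unit_disk"
    unfolding tri_subset_unit_disk_iff using norms[of P'] norms[of Q'] norms[of R'] by simp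
  then have "has_rotation_number (tri (P' - g) (Q' - g) (R' - g)) (1/3)"
    using adm equilateral_nondegenerate[OF E'' m] congruent_tri_translate[of P' g Q' R']
    unfolding mu_admissible_def by blast
  moreover have "\<not> has_rotation_number (tri (P' - g) (Q' - g) (R' - g)) (1/3)"
    unfolding tri_def using norms small
    by (intro not_rotation_third_if_small[where r = "m / sqrt 3"]) simp_all
  ultimately show False by contradiction
qed

lemma exists_admissible_equilateral_kappa_half:
  assumes E: "equilateral L P Q R" and L: "L > 0"
  shows "\<exists>P' Q' R'. mu_admissible P Q R P' Q' R' \<and> kappa P' Q' R' = 1/2"
proof -
  define g k where "g = (P + Q + R) / 3" and "k = sqrt 3 / (2 * L)"
  have k: "k > 0" using L by (simp add: k_def)
  define P' Q' R' where "P' = k *\<^sub>R (P - g)" and "Q' = k *\<^sub>R (Q - g)" and "R' = k *\<^sub>R (R - g)"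
  have "dist (k *\<^sub>R (x - g)) (k *\<^sub>R (y - g)) = k * dist x y" for x y
    using k by (simp add: dist_norm flip: scaleR_diff_right)
  then have E': "equilateral (sqrt 3 / 2) P' Q' R'"
    using E L by (simp add: equilateral_def P'_def Q'_def R'_def k_def)
  have half: "norm (k *\<^sub>R (X - g)) = 1/2" if "X \<in> {P, Q, R}" for X
    using equilateral_dist_centroid_all[OF E that] k L by (simp add: g_def dist_norm k_def)
  have disk: "tri P' Q' R' \<subseteq> unit_disk"
    unfolding tri_subset_unit_disk_iff P'_def Q'_def R'_def using half[of P] half[of Q] half[of R]
    by simp
  have copies: "has_rotation_number (tri P'' Q'' R'') (1/3)"
    if in_disk: "tri P'' Q'' R'' \<subseteq> unit_disk"
      and cong: "congruent_tri (tri P'' Q'' R'') (tri P' Q' R')" for P'' Q'' R''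
  proof -
    obtain f where f: "\<And>x y. dist (f x) (f y) = 1 * dist x y"
      and img: "f ` (convex hull {P'', Q'', R''}) = convex hull {P', Q', R'}"
      using cong unfolding congruent_tri_def tri_def by auto
    have "equilateral (sqrt 3 / 2 / 1) P'' Q'' R''"
      by (rule similar_image_of_equilateral[OF _ f img E']) simp_all
    then have "equilateral (sqrt 3 / 2) P'' Q'' R''" by simp
    moreover have "norm P'' < 1" "norm Q'' < 1" "norm R'' < 1"
      using in_disk by (simp_all add: tri_subset_unit_disk_iff)
    ultimately show ?thesis
      unfolding tri_def by (intro rotation_third_if_equilateral)
  qed
  have "mu_admissible P Q R P' Q' R'"
    unfolding mu_admissible_def
    using equilateral_nondegenerate[OF E'] disk copies similar_tri_scale[OF k] by (simp add: P'_def Q'_def R'_def)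
  moreover have "kappa P' Q' R' = 1/2"
    using equilateral_kappa[OF E'] by simp
  ultimately show ?thesis by blast
qed

theorem proposition5p3:
  fixes P Q R :: complex
  assumes "P \<noteq> Q" and "dist P Q = dist Q R" and "dist Q R = dist R P"
  shows "mu P Q R = 1/2"
proof -
  have E: "equilateral (dist P Q) P Q R"
    using assms(2,3) by (simp add: equilateral_def)
  have L: "dist P Q > 0"
    using assms(1) by simp
  obtain P' Q' R' where "mu_admissible P Q R P' Q' R'" "kappa P' Q' R' = 1/2"
    using exists_admissible_equilateral_kappa_half[OF E L] by blast
  then have "1/2 \<in> {kappa P' Q' R' | P' Q' R'. mu_admissible P Q R P' Q' R'}"
    by force
  then show ?thesis
    unfolding mu_eq_Inf_admissible
    by (rule cInf_eq_minimum) (use admissible_equilateral_kappa_ge[OF E L] in blast)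
qed
end
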